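(* Let $\alpha>0$, $g,h\in\mathbb{R}$ with $h>g$, $F_0\in(0,1)$, $X_0\in\mathbb{R}$, and define the quantile function $X:(0,1)\to\mathbb{R}$ by $$X(F)=X_0+\frac{1}{\alpha}\int_{F_0}^{F}\frac{d\xi}{\xi^g-\xi^h}.$$ Then: (i) if $g\geq 1$, $\lim_{F\to 0^+}X(F)=-\infty$ (infinite left tail); (ii) if $g<1$, $\lim_{F\to 0^+}X(F)$ is finite and equals $$X_0-\frac{F_0^{\lambda}}{\alpha\lambda}\left(1+\frac{\lambda F_0^{\gamma}}{\gamma}\,\Phi\!\left[F_0^{\gamma},1,1+\frac{\lambda}{\gamma}\right]\right),$$ where $\gamma=h-g$ and $\lambda=1-g$; (iii) for all such parameters, $\lim_{F\to 1^-}X(F)=+\infty$ (infinite right tail).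
   Context: Lerch's transcendent is $\Phi[z,s,v]=\sum_{n=0}^{\infty}\frac{z^n}{(v+n)^s}$ for $|z|<1$, $v\notin\{0,-1,-2,\dots\}$. The function $X(F)$ is the inverse of the S-distribution cumulative $F$ solving $dF/dX=\alpha(F^g-F^h)$, $F(X_0)=F_0$. *)

theory Defs
  imports "HOL-Analysis.Analysis"
begin

definition lerch_Phi :: "real \<Rightarrow> real \<Rightarrow> real \<Rightarrow> real" where
  "lerch_Phi z s v = (\<Sum>n. z ^ n / (v + real n) powr s)"

definition S_quantile :: "real \<Rightarrow> real \<Rightarrow> real \<Rightarrow> real \<Rightarrow> real \<Rightarrow> real \<Rightarrow> real" where
  "S_quantile \<alpha> g h F0 X0 F =
     X0 + (1 / \<alpha>) * (LBINT \<xi>=ereal F0..ereal F. 1 / (\<xi> powr g - \<xi> powr h))"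

end

theory Submission
  imports Defs "HOL-Real_Asymp.Real_Asymp"
begin

text \<open>
  On \<open>(0,1)\<close> the density \<open>1/(x^g - x^h) = x^(-g) / (1 - x^(h-g))\<close> is positive.
  Near \<open>1\<close> the denominator vanishes linearly, so the integral diverges logarithmically at the
  right end. Near \<open>0\<close> the density is at least \<open>1/x\<close> when \<open>g \<ge> 1\<close>, which again gives a
  logarithmic divergence. When \<open>g < 1\<close>, expanding the density as a geometric series and
  integrating termwise yields the antiderivative \<open>\<Sum>n. x^(e n) / e n\<close> with positive exponents
  \<open>e n = (1 - g) + n (h - g)\<close>; it vanishes at \<open>0\<close>, and its value at \<open>F0\<close> is a Lerch
  transcendent once the term \<open>n = 0\<close> is split off.
\<close>

lemma set_integral_Icc_FTC_real:
  fixes f G :: "real \<Rightarrow> real"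
  assumes "a \<le> b"
    and "\<And>x. a \<le> x \<Longrightarrow> x \<le> b \<Longrightarrow> DERIV G x :> f x"
    and "\<And>x. a \<le> x \<Longrightarrow> x \<le> b \<Longrightarrow> isCont f x"
  shows "(LBINT x:{a..b}. f x) = G b - G a"
  using integral_FTC_Icc_real[OF assms] by (simp add: set_lebesgue_integral_def mult.commute)

lemma antiderivative_diff_le_set_integral:
  fixes f k G :: "real \<Rightarrow> real"
  assumes "a \<le> b" "set_integrable lborel {a..b} k"
    and "\<And>x. a \<le> x \<Longrightarrow> x \<le> b \<Longrightarrow> DERIV G x :> f x"
    and "\<And>x. a \<le> x \<Longrightarrow> x \<le> b \<Longrightarrow> isCont f x"
    and "\<And>x. a \<le> x \<Longrightarrow> x \<le> b \<Longrightarrow> f x \<le> k x"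
  shows "G b - G a \<le> (LBINT x:{a..b}. k x)"
proof -
  have "set_integrable lborel {a..b} f"
    using assms(4) by (intro borel_integrable_atLeastAtMost' continuous_at_imp_continuous_on) auto
  then have "(LBINT x:{a..b}. f x) \<le> (LBINT x:{a..b}. k x)"
    using assms(2,5) by (intro set_integral_mono) auto
  then show ?thesis
    using set_integral_Icc_FTC_real[OF assms(1,3,4)] by simp
qed

lemma powr_diff_pos:
  fixes x g h :: real
  assumes "0 < x" "x < 1" "g < h"
  shows "0 < x powr g - x powr h"
  using powr_less_mono'[of x g h] assms by simp

lemma powr_diff_lt_one:
  fixes x g h :: real
  assumes "0 < x" "x < 1" "g < h"
  shows "x powr (h - g) < 1"
  using powr_less_mono'[of x 0 "h - g"] assms by simp

lemma set_integrable_inverse_powr_diff: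
  fixes a b g h :: real
  assumes "0 < a" "b < 1" "g < h"
  shows "set_integrable lborel {a..b} (\<lambda>x. 1 / (x powr g - x powr h))"
proof (rule borel_integrable_atLeastAtMost')
  show "continuous_on {a..b} (\<lambda>x. 1 / (x powr g - x powr h))"
    using assms powr_diff_pos[of _ g h] by (intro continuous_intros) (auto simp: less_imp_neq[symmetric])
qed

lemma S_quantile_below_F0:
  assumes "0 < F" "F \<le> F0"
  shows "S_quantile \<alpha> g h F0 X0 F = X0 - (LBINT x:{F..F0}. 1 / (x powr g - x powr h)) / \<alpha>"
  unfolding S_quantile_def
  by (subst interval_integral_endpoints_reverse) (use assms in \<open>simp add: interval_integral_Icc\<close>)

lemma S_quantile_above_F0:
  assumes "F0 \<le> F"
  shows "S_quantile \<alpha> g h F0 X0 F = X0 + (LBINT x:{F0..F}. 1 / (x powr g - x powr h)) / \<alpha>"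
  unfolding S_quantile_def using assms by (simp add: interval_integral_Icc)

subsection \<open>The left tail for \<open>g \<ge> 1\<close>\<close>

lemma powr_diff_le_self:
  fixes x g h :: real
  assumes "0 < x" "x < 1" "1 \<le> g"
  shows "x powr g - x powr h \<le> x"
proof -
  have "x powr g \<le> x" using powr_mono'[of 1 g x] assms by simp
  then show ?thesis using powr_ge_zero[of x h] by linarith
qed

lemma filterlim_S_quantile_at_bot:
  fixes \<alpha> g h F0 X0 :: real
  assumes "\<alpha> > 0" "g < h" "0 < F0" "F0 < 1" "1 \<le> g"
  shows "filterlim (S_quantile \<alpha> g h F0 X0) at_bot (at_right 0)"
proof (rule filterlim_at_bot_mono)
  show "filterlim (\<lambda>F. X0 - (ln F0 - ln F) / \<alpha>) at_bot (at_right 0)"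
    using assms(1) by real_asymp
  show "\<forall>\<^sub>F F in at_right 0. S_quantile \<alpha> g h F0 X0 F \<le> X0 - (ln F0 - ln F) / \<alpha>"
    using eventually_at_right_real[OF assms(3)]
  proof (rule eventually_mono)
    fix F assume F: "F \<in> {0<..<F0}"
    have "ln F0 - ln F \<le> (LBINT x:{F..F0}. 1 / (x powr g - x powr h))"
    proof (rule antiderivative_diff_le_set_integral)
      show "set_integrable lborel {F..F0} (\<lambda>x. 1 / (x powr g - x powr h))"
        using F assms by (intro set_integrable_inverse_powr_diff) auto
      fix x assume x: "F \<le> x" "x \<le> F0"
      then show "DERIV ln x :> 1 / x" "isCont (\<lambda>x. 1 / x) x"
        using F by (auto intro!: derivative_eq_intros continuous_intros)
      show "1 / x \<le> 1 / (x powr g - x powr h)"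
        using x F assms powr_diff_pos[of x g h] powr_diff_le_self[of x g h]
        by (intro divide_left_mono) auto
    qed (use F in auto)
    then show "S_quantile \<alpha> g h F0 X0 F \<le> X0 - (ln F0 - ln F) / \<alpha>"
      using F assms(1) S_quantile_below_F0[of F F0 \<alpha> g h X0] by (auto intro!: divide_right_mono)
  qed
qed

subsection \<open>The right tail\<close>

lemma one_minus_powr_le:
  fixes a x c :: real
  assumes "0 < a" "a \<le> x" "x \<le> 1" "0 \<le> c"
  shows "1 - x powr c \<le> c * ((1 - x) / a)"
proof -
  have x0: "0 < x" using assms by linarith
  have "x powr c = exp (c * ln x)"
    using x0 by (simp add: powr_def)
  then have "1 - x powr c \<le> c * (- ln x)"
    using exp_ge_add_one_self[of "c * ln x"] by linarith
  also have "- ln x \<le> (1 - x) / a"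
  proof -
    have "- ln x \<le> 1 / x - 1"
      using ln_le_minus_one[of "1 / x"] x0 by (simp add: ln_div)
    also have "\<dots> = (1 - x) / x" using x0 by (simp add: field_simps)
    also have "\<dots> \<le> (1 - x) / a" using assms by (intro divide_left_mono) auto
    finally show ?thesis .
  qed
  then have "c * (- ln x) \<le> c * ((1 - x) / a)"
    using assms by (intro mult_left_mono) auto
  finally show ?thesis .
qed

lemma powr_diff_le_linear:
  fixes a x g h :: real
  assumes "0 < a" "a \<le> x" "x < 1" "g < h"
  shows "x powr g - x powr h \<le> (a powr g + 1) * (h - g) / a * (1 - x)"
proof -
  have x0: "0 < x" using assms by linarith
  have "x powr g \<le> a powr g + 1"
  proof (cases "g \<ge> 0")
    case True
    then show ?thesis using powr_le1[of g x] x0 assms by (smt (verit) powr_ge_zero)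
  next
    case False
    then show ?thesis using powr_mono2'[of g a x] assms by (smt (verit) powr_ge_zero)
  qed
  moreover have "0 \<le> 1 - x powr (h - g)"
    using powr_diff_lt_one[of x g h] x0 assms by simp
  ultimately have "x powr g * (1 - x powr (h - g)) \<le> (a powr g + 1) * ((h - g) * ((1 - x) / a))"
    using one_minus_powr_le[of a x "h - g"] assms by (intro mult_mono) auto
  moreover have "x powr g - x powr h = x powr g * (1 - x powr (h - g))"
    using x0 by (simp add: powr_add[symmetric] algebra_simps)
  ultimately show ?thesis by (simp add: field_simps)
qed

lemma filterlim_S_quantile_at_top:
  fixes \<alpha> g h F0 X0 :: real
  assumes "\<alpha> > 0" "g < h" "0 < F0" "F0 < 1"
  shows "filterlim (S_quantile \<alpha> g h F0 X0) at_top (at_left 1)"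
proof (rule filterlim_at_top_mono)
  define K where "K = (F0 powr g + 1) * (h - g) / F0"
  have K: "0 < K" using assms unfolding K_def by (simp add: add_pos_nonneg)
  show "filterlim (\<lambda>F. X0 + (ln (1 - F0) - ln (1 - F)) / K / \<alpha>) at_top (at_left 1)"
    using K assms(1) by real_asymp
  show "\<forall>\<^sub>F F in at_left 1. X0 + (ln (1 - F0) - ln (1 - F)) / K / \<alpha> \<le> S_quantile \<alpha> g h F0 X0 F"
    using eventually_at_left_real[OF assms(4)]
  proof (rule eventually_mono)
    fix F assume F: "F \<in> {F0<..<1}"
    have "(- ln (1 - F) / K) - (- ln (1 - F0) / K) \<le> (LBINT x:{F0..F}. 1 / (x powr g - x powr h))"
    proof (rule antiderivative_diff_le_set_integral)
      show "set_integrable lborel {F0..F} (\<lambda>x. 1 / (x powr g - x powr h))"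
        using F assms by (intro set_integrable_inverse_powr_diff) auto
      fix x assume x: "F0 \<le> x" "x \<le> F"
      then show "DERIV (\<lambda>x. - ln (1 - x) / K) x :> 1 / (K * (1 - x))"
        "isCont (\<lambda>x. 1 / (K * (1 - x))) x"
        using F K by (auto intro!: derivative_eq_intros continuous_intros simp: field_simps)
      have "x powr g - x powr h \<le> K * (1 - x)"
        unfolding K_def by (rule powr_diff_le_linear) (use x F assms in auto)
      then show "1 / (K * (1 - x)) \<le> 1 / (x powr g - x powr h)"
        using x F K assms powr_diff_pos[of x g h] by (intro divide_left_mono mult_pos_pos) auto
    qed (use F in auto)
    then have "(ln (1 - F0) - ln (1 - F)) / K / \<alpha> \<le> (LBINT x:{F0..F}. 1 / (x powr g - x powr h)) / \<alpha>"
      using assms(1) by (intro divide_right_mono) (auto simp: diff_divide_distrib)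
    then show "X0 + (ln (1 - F0) - ln (1 - F)) / K / \<alpha> \<le> S_quantile \<alpha> g h F0 X0 F"
      using F S_quantile_above_F0[of F0 F \<alpha> g h X0] by simp
  qed
qed

subsection \<open>The left tail for \<open>g < 1\<close>\<close>

definition S_exponent :: "real \<Rightarrow> real \<Rightarrow> nat \<Rightarrow> real" where
  "S_exponent g h n = (1 - g) + real n * (h - g)"

definition S_primitive :: "real \<Rightarrow> real \<Rightarrow> real \<Rightarrow> real" where
  "S_primitive g h x = (\<Sum>n. x powr S_exponent g h n / S_exponent g h n)"

lemma S_exponent_ge:
  fixes g h :: real
  assumes "g < h"
  shows "1 - g \<le> S_exponent g h n"
  using assms unfolding S_exponent_def by simp

lemma S_exponent_pos:
  fixes g h :: real
  assumes "g < 1" "g < h"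
  shows "0 < S_exponent g h n"
  using S_exponent_ge[OF assms(2), of n] assms(1) by linarith

lemma powr_real_of_nat_mult:
  fixes x c :: real
  assumes "0 < x"
  shows "x powr (real n * c) = (x powr c) ^ n"
  using assms by (simp add: powr_powr[symmetric] powr_realpow[symmetric] mult.commute)

lemma powr_S_exponent:
  fixes x g h :: real
  assumes "0 < x"
  shows "x powr S_exponent g h n = x powr (1 - g) * (x powr (h - g)) ^ n"
  using assms by (simp add: S_exponent_def powr_add powr_real_of_nat_mult)

lemma sums_inverse_powr_diff:
  fixes x g h :: real
  assumes "0 < x" "x < 1" "g < h"
  shows "(\<lambda>n. x powr (S_exponent g h n - 1)) sums (1 / (x powr g - x powr h))"
proof -
  have "x powr (S_exponent g h n - 1) = x powr (- g) * (x powr (h - g)) ^ n" for n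
  proof -
    have "x powr (S_exponent g h n - 1) = x powr (- g + real n * (h - g))"
      by (simp add: S_exponent_def)
    also have "\<dots> = x powr (- g) * (x powr (h - g)) ^ n"
      by (simp only: powr_add powr_real_of_nat_mult[OF assms(1)])
    finally show ?thesis .
  qed
  moreover have "(\<lambda>n. x powr (- g) * (x powr (h - g)) ^ n) sums (x powr (- g) * (1 / (1 - x powr (h - g))))"
    using powr_diff_lt_one[OF assms] by (intro sums_mult geometric_sums) simp
  moreover have "x powr (- g) * (1 / (1 - x powr (h - g))) = 1 / (x powr g - x powr h)"
  proof -
    have "x powr h = x powr g * x powr (h - g)"
      using assms by (simp add: powr_add[symmetric])
    then show ?thesis
      using assms powr_diff_lt_one[OF assms] by (simp add: powr_minus field_simps)
  qed
  ultimately show ?thesis by simp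
qed

lemma S_primitive_term_le:
  fixes x g h :: real
  assumes "0 < x" "g < 1" "g < h"
  shows "x powr S_exponent g h n / S_exponent g h n \<le> x powr (1 - g) / (1 - g) * (x powr (h - g)) ^ n"
proof -
  have "x powr S_exponent g h n / S_exponent g h n \<le> x powr S_exponent g h n / (1 - g)"
    using S_exponent_ge[OF assms(3)] S_exponent_pos[OF assms(2,3)] assms(2)
    by (intro divide_left_mono) auto
  then show ?thesis
    using assms by (simp add: powr_S_exponent)
qed

lemma S_primitive_sums:
  fixes x g h :: real
  assumes "0 < x" "x < 1" "g < 1" "g < h"
  shows "(\<lambda>n. x powr S_exponent g h n / S_exponent g h n) sums S_primitive g h x"
proof -
  have "summable (\<lambda>n. x powr S_exponent g h n / S_exponent g h n)"
  proof (rule summable_comparison_test')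
    show "summable (\<lambda>n. x powr (1 - g) / (1 - g) * (x powr (h - g)) ^ n)"
      using powr_diff_lt_one[of x g h] assms by (intro summable_mult summable_geometric) auto
    show "norm (x powr S_exponent g h n / S_exponent g h n)
        \<le> x powr (1 - g) / (1 - g) * (x powr (h - g)) ^ n" for n
      using S_primitive_term_le[OF assms(1,3,4)] S_exponent_pos[OF assms(3,4), of n] by simp
  qed
  then show ?thesis
    unfolding S_primitive_def by (rule summable_sums)
qed

lemma S_primitive_le:
  fixes x g h :: real
  assumes "0 < x" "x < 1" "g < 1" "g < h"
  shows "S_primitive g h x \<le> x powr (1 - g) / ((1 - g) * (1 - x powr (h - g)))"
proof -
  have "(\<lambda>n. x powr (1 - g) / (1 - g) * (x powr (h - g)) ^ n)
      sums (x powr (1 - g) / (1 - g) * (1 / (1 - x powr (h - g))))"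
    using powr_diff_lt_one[of x g h] assms by (intro sums_mult geometric_sums) auto
  from sums_le[OF S_primitive_term_le[OF assms(1,3,4)] S_primitive_sums[OF assms] this]
  show ?thesis by simp
qed

lemma S_primitive_nonneg:
  fixes x g h :: real
  assumes "0 < x" "x < 1" "g < 1" "g < h"
  shows "0 \<le> S_primitive g h x"
proof -
  have "0 \<le> x powr S_exponent g h n / S_exponent g h n" for n
    using S_exponent_pos[OF assms(3,4), of n] by simp
  then show ?thesis
    using sums_le[OF _ sums_zero S_primitive_sums[OF assms]] by blast
qed

lemma tendsto_S_primitive_at_right_0:
  fixes g h :: real
  assumes "g < 1" "g < h"
  shows "(S_primitive g h \<longlongrightarrow> 0) (at_right 0)"
proof (rule tendsto_sandwich[of "\<lambda>_. 0" _ _ "\<lambda>x. x powr (1 - g) / ((1 - g) * (1 - x powr (h - g)))"])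
  show "\<forall>\<^sub>F x in at_right 0. 0 \<le> S_primitive g h x"
    using eventually_at_right_real[OF zero_less_one]
    by eventually_elim (use assms in \<open>auto intro: S_primitive_nonneg\<close>)
  show "\<forall>\<^sub>F x in at_right 0. S_primitive g h x \<le> x powr (1 - g) / ((1 - g) * (1 - x powr (h - g)))"
    using eventually_at_right_real[OF zero_less_one]
    by eventually_elim (use assms in \<open>auto intro: S_primitive_le\<close>)
  show "((\<lambda>x. x powr (1 - g) / ((1 - g) * (1 - x powr (h - g)))) \<longlongrightarrow> 0) (at_right 0)"
    using assms by real_asymp
qed simp

text \<open>The geometric expansion of the density has nonnegative terms, so it may be integrated
  termwise.\<close>

lemma set_integral_inverse_powr_diff:
  fixes a b g h :: real
  assumes "0 < a" "a \<le> b" "b < 1" "g < 1" "g < h"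
  shows "(LBINT x:{a..b}. 1 / (x powr g - x powr h)) = S_primitive g h b - S_primitive g h a"
proof -
  define u where "u n x = indicator {a..b} x * x powr (S_exponent g h n - 1)" for n x
  have integral_u: "integral\<^sup>L lborel (u n) =
      b powr S_exponent g h n / S_exponent g h n - a powr S_exponent g h n / S_exponent g h n" for n
  proof -
    have "integral\<^sup>L lborel (u n) = (LBINT x:{a..b}. x powr (S_exponent g h n - 1))"
      by (simp add: u_def[abs_def] set_lebesgue_integral_def)
    also have "\<dots> = b powr S_exponent g h n / S_exponent g h n - a powr S_exponent g h n / S_exponent g h n"
      using assms S_exponent_pos[OF assms(4,5), of n]
      by (intro set_integral_Icc_FTC_real) (auto intro!: derivative_eq_intros continuous_intros)
    finally show ?thesis .
  qed
  have u_sums: "(\<lambda>n. u n x) sums (indicator {a..b} x * (1 / (x powr g - x powr h)))" for x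
    using sums_inverse_powr_diff[of x g h] assms
    by (cases "x \<in> {a..b}") (auto simp: u_def)
  have "(\<lambda>n. integral\<^sup>L lborel (u n)) sums (S_primitive g h b - S_primitive g h a)"
    unfolding integral_u using assms by (intro sums_diff S_primitive_sums) auto
  moreover have "(\<integral>x. (\<Sum>n. u n x) \<partial>lborel) = (\<Sum>n. integral\<^sup>L lborel (u n))"
  proof (rule integral_suminf)
    show "integrable lborel (u n)" for n
    proof -
      have "continuous_on {a..b} (\<lambda>x. x powr (S_exponent g h n - 1))"
        using assms by (intro continuous_intros) auto
      from borel_integrable_atLeastAtMost'[OF this] show ?thesis
        by (simp add: u_def[abs_def] set_integrable_def)
    qed
    show "AE x in lborel. summable (\<lambda>n. norm (u n x))"
      using u_sums by (auto simp: u_def sums_iff)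
    have "(\<lambda>n. \<integral>x. norm (u n x) \<partial>lborel) = (\<lambda>n. integral\<^sup>L lborel (u n))"
      by (simp add: u_def[abs_def] abs_mult)
    then show "summable (\<lambda>n. \<integral>x. norm (u n x) \<partial>lborel)"
      using \<open>(\<lambda>n. integral\<^sup>L lborel (u n)) sums _\<close> by (simp add: sums_iff)
  qed
  ultimately show ?thesis
    using u_sums by (simp add: set_lebesgue_integral_def sums_iff)
qed

lemma S_quantile_eq_S_primitive:
  assumes "0 < F" "F \<le> F0" "F0 < 1" "g < 1" "g < h"
  shows "S_quantile \<alpha> g h F0 X0 F = X0 - (S_primitive g h F0 - S_primitive g h F) / \<alpha>"
  using S_quantile_below_F0 set_integral_inverse_powr_diff assms by simp

lemma tendsto_S_quantile_at_right_0:
  fixes \<alpha> g h F0 X0 :: real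
  assumes "g < h" "0 < F0" "F0 < 1" "g < 1"
  shows "(S_quantile \<alpha> g h F0 X0 \<longlongrightarrow> X0 - S_primitive g h F0 / \<alpha>) (at_right 0)"
proof -
  have "((\<lambda>F. X0 - (S_primitive g h F0 - S_primitive g h F) / \<alpha>) \<longlongrightarrow> X0 - (S_primitive g h F0 - 0) / \<alpha>)
      (at_right 0)"
    unfolding divide_inverse using assms
    by (intro tendsto_diff tendsto_const tendsto_mult_right tendsto_S_primitive_at_right_0)
  moreover have "\<forall>\<^sub>F F in at_right 0.
      X0 - (S_primitive g h F0 - S_primitive g h F) / \<alpha> = S_quantile \<alpha> g h F0 X0 F"
    using eventually_at_right_real[OF assms(2)]
    by eventually_elim (use assms in \<open>simp add: S_quantile_eq_S_primitive\<close>)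
  ultimately show ?thesis
    by (simp add: tendsto_cong)
qed

lemma S_primitive_eq_lerch_Phi:
  fixes x g h :: real
  assumes "0 < x" "x < 1" "g < 1" "g < h"
  defines "lam \<equiv> 1 - g" and "gam \<equiv> h - g"
  shows "S_primitive g h x =
    x powr lam / lam * (1 + lam * x powr gam / gam * lerch_Phi (x powr gam) 1 (1 + lam / gam))"
proof -
  define t where "t n = x powr S_exponent g h n / S_exponent g h n" for n
  define C where "C = x powr lam * x powr gam / gam"
  have lam: "0 < lam" and gam: "0 < gam" and C: "0 < C"
    using assms unfolding lam_def gam_def C_def by auto
  have t_Suc: "t (Suc n) = C * ((x powr gam) ^ n / (1 + lam / gam + real n) powr 1)" for n
  proof -
    have "S_exponent g h (Suc n) = gam * (1 + lam / gam + real n)"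
      using gam unfolding S_exponent_def lam_def gam_def by (simp add: field_simps)
    moreover have "0 < 1 + lam / gam + real n"
      using lam gam by (simp add: add_pos_nonneg)
    ultimately show ?thesis
      using assms(1) unfolding t_def C_def lam_def gam_def
      by (simp add: powr_S_exponent field_simps)
  qed
  have "t sums S_primitive g h x"
    using S_primitive_sums[OF assms(1-4)] unfolding t_def .
  then have "(\<lambda>n. t (Suc n)) sums (S_primitive g h x - t 0)"
    by (simp add: sums_Suc_iff)
  then have "(\<lambda>n. (x powr gam) ^ n / (1 + lam / gam + real n) powr 1) sums ((S_primitive g h x - t 0) / C)"
    using sums_divide[of "\<lambda>n. t (Suc n)" _ C] C by (simp add: t_Suc)
  then have "lerch_Phi (x powr gam) 1 (1 + lam / gam) = (S_primitive g h x - t 0) / C"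
    unfolding lerch_Phi_def by (rule sums_unique[symmetric])
  moreover have "t 0 = x powr lam / lam"
    unfolding t_def S_exponent_def lam_def by simp
  ultimately have "S_primitive g h x = x powr lam / lam + C * lerch_Phi (x powr gam) 1 (1 + lam / gam)"
    using C by simp
  then show ?thesis
    using lam unfolding C_def by (simp add: field_simps)
qed

theorem mainTheorem4:
  fixes \<alpha> g h F0 X0 :: real
  assumes "\<alpha> > 0" and "h > g" and "0 < F0" and "F0 < 1"
  defines "X \<equiv> S_quantile \<alpha> g h F0 X0"
  defines "gam \<equiv> h - g"
  defines "lam \<equiv> 1 - g"
  shows "(g \<ge> 1 \<longrightarrow> filterlim X at_bot (at_right 0))
       \<and> (g < 1 \<longrightarrow> (X \<longlongrightarrow>
            X0 - F0 powr lam / (\<alpha> * lam) *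
              (1 + lam * F0 powr gam / gam * lerch_Phi (F0 powr gam) 1 (1 + lam / gam)))
            (at_right 0))
       \<and> filterlim X at_top (at_left 1)"
proof (intro conjI impI)
  show "filterlim X at_bot (at_right 0)" if "g \<ge> 1"
    unfolding X_def using filterlim_S_quantile_at_bot assms(1-4) that by simp
  show "(X \<longlongrightarrow> X0 - F0 powr lam / (\<alpha> * lam) *
      (1 + lam * F0 powr gam / gam * lerch_Phi (F0 powr gam) 1 (1 + lam / gam))) (at_right 0)"
    if "g < 1"
  proof -
    have "S_primitive g h F0 / \<alpha> = F0 powr lam / (\<alpha> * lam) *
        (1 + lam * F0 powr gam / gam * lerch_Phi (F0 powr gam) 1 (1 + lam / gam))"
      using S_primitive_eq_lerch_Phi[of F0 g h] assms that unfolding lam_def gam_def by simp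
    then show ?thesis
      using tendsto_S_quantile_at_right_0[of g h F0 \<alpha> X0] assms that unfolding X_def by simp
  qed
  show "filterlim X at_top (at_left 1)"
    unfolding X_def using filterlim_S_quantile_at_top assms(1-4) by simp
qed

end
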